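(* Let $T=2^m$, $d\ge1$ and $u_{1:T}\in(\mathbb{R}^d)^T$. With the Haar coefficients and detail sequences defined in the context, for every scale-location pair $(j,l)$, $$\|\hat u^{(j,l)}\|_2=2^{-1/2}\sqrt{P^{(j,l)}\bar S^{(j,l)}},$$ and for every scale $j$, $$\sum_l\|\hat u^{(j,l)}\|_2\le 2^{-1/2}\sqrt{P^{(j)}\bar S^{(j)}}.$$
   Context: Haar features for $T=2^m$: for scale $j\in[1:m]$ and location $l\in[1:2^{-j}T]$, $h^{(j,l)}\in\mathbb{R}^T$ has $t$-th entry $1$ for $t\in[2^j(l-1)+1:2^j(l-1)+2^{j-1}]$, $-1$ for $t\in[2^j(l-1)+2^{j-1}+1:2^jl]$, and $0$ otherwise; normalized $\tilde h^{(j,l)}=2^{-j/2}h^{(j,l)}$. For $i\in[1:d]$, $u^{(i)}_{1:T}\in\mathbb{R}^T$ is the sequence of $i$-th coordinates of $u_1,\ldots,u_T$. Coefficient $\hat u^{(j,l)}\in\mathbb{R}^d$ has $i$-th entry $\langle\tilde h^{(j,l)},u^{(i)}_{1:T}\rangle$. Detail sequences $z^{(j,l)}\in(\mathbb{R}^d)^T$: $z^{(j,l)}_t=\hat u^{(j,l)}\tilde h^{(j,l)}_t$; $z^{(j)}=\sum_l z^{(j,l)}$. Statistics: $\bar S^{(j,l)}=\sum_{t=1}^T\|z^{(j,l)}_t\|_2$, $\bar S^{(j)}=\sum_{t=1}^T\|z^{(j)}_t\|_2$, $P^{(j,l)}=\sum_{t=2^j(l-1)+1}^{2^jl-1}\|z^{(j,l)}_{t+1}-z^{(j,l)}_t\|_2$,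 $P^{(j)}=\sum_l P^{(j,l)}$. *)

theory Defs
  imports "HOL-Analysis.Analysis"
begin

text \<open>Time horizon T = 2^m; time indices t range over {1..T}; a sequence
u_1,...,u_T in R^d is a function u :: nat => real^'d (values outside {1..T} irrelevant).\<close>

definition haar :: "nat \<Rightarrow> nat \<Rightarrow> nat \<Rightarrow> real" where
  "haar j l t =
     (if 2^j * (l - 1) + 1 \<le> t \<and> t \<le> 2^j * (l - 1) + 2^(j - 1) then 1
      else if 2^j * (l - 1) + 2^(j - 1) + 1 \<le> t \<and> t \<le> 2^j * l then -1
      else 0)"

definition haar_n :: "nat \<Rightarrow> nat \<Rightarrow> nat \<Rightarrow> real" where
  "haar_n j l t = 2 powr (- real j / 2) * haar j l t"

definition haar_coef :: "nat \<Rightarrow> (nat \<Rightarrow> real^'d) \<Rightarrow> nat \<Rightarrow> nat \<Rightarrow> real^'d" where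
  "haar_coef m u j l = (\<chi> i. \<Sum>t = 1..2^m. haar_n j l t * (u t $ i))"

definition detail :: "nat \<Rightarrow> (nat \<Rightarrow> real^'d) \<Rightarrow> nat \<Rightarrow> nat \<Rightarrow> nat \<Rightarrow> real^'d" where
  "detail m u j l t = haar_n j l t *\<^sub>R haar_coef m u j l"

definition detail_scale :: "nat \<Rightarrow> (nat \<Rightarrow> real^'d) \<Rightarrow> nat \<Rightarrow> nat \<Rightarrow> real^'d" where
  "detail_scale m u j t = (\<Sum>l = 1..2^m div 2^j. detail m u j l t)"

definition Sbar :: "nat \<Rightarrow> (nat \<Rightarrow> real^'d) \<Rightarrow> nat \<Rightarrow> nat \<Rightarrow> real" where
  "Sbar m u j l = (\<Sum>t = 1..2^m. norm (detail m u j l t))"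

definition Sbar_scale :: "nat \<Rightarrow> (nat \<Rightarrow> real^'d) \<Rightarrow> nat \<Rightarrow> real" where
  "Sbar_scale m u j = (\<Sum>t = 1..2^m. norm (detail_scale m u j t))"

definition Pvar :: "nat \<Rightarrow> (nat \<Rightarrow> real^'d) \<Rightarrow> nat \<Rightarrow> nat \<Rightarrow> real" where
  "Pvar m u j l = (\<Sum>t = 2^j * (l - 1) + 1 .. 2^j * l - 1.
                      norm (detail m u j l (t + 1) - detail m u j l t))"

definition Pvar_scale :: "nat \<Rightarrow> (nat \<Rightarrow> real^'d) \<Rightarrow> nat \<Rightarrow> real" where
  "Pvar_scale m u j = (\<Sum>l = 1..2^m div 2^j. Pvar m u j l)"

end

theory Submission
  imports Defs
begin

text \<open>The absolute value of h^(j,l) is the indicator of the dyadic block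
(2^j (l-1), 2^j l], and inside that block h^(j,l) has a single jump, of height 2.
As z^(j,l)_t = 2^(-j/2) h^(j,l)_t hat u^(j,l), this gives
S^(j,l) = 2^(j/2) ||hat u^(j,l)|| and P^(j,l) = 2^(1-j/2) ||hat u^(j,l)||, whose product
is 2 ||hat u^(j,l)||^2. At a fixed scale the blocks are disjoint, so at every time at most
one z^(j,l) is nonzero; hence S^(j) and P^(j) are the sums over l of S^(j,l) and
P^(j,l), i.e. the same multiples of the sum of the ||hat u^(j,l)||, and the second claim
holds with equality.\<close>

definition haar_block :: "nat \<Rightarrow> nat \<Rightarrow> nat \<Rightarrow> real" where
  "haar_block a h t =
     (if a < t \<and> t \<le> a + h then 1 else if a + h < t \<and> t \<le> a + 2 * h then -1 else 0)"

lemma double_power_pred: "j \<ge> 1 \<Longrightarrow> 2 * 2^(j - 1) = (2::'a::comm_semiring_1)^j"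
  using power_minus_mult[of j "2::'a"] by (simp add: mult.commute)

lemma dyadic_block_end:
  assumes "j \<ge> 1" "l \<ge> 1"
  shows "2^j * (l - 1) + 2 * 2^(j - 1) = (2::nat)^j * l"
  using assms(2) double_power_pred[OF assms(1)] by (cases l) simp_all

lemma haar_eq_haar_block:
  assumes "j \<ge> 1" "l \<ge> 1"
  shows "haar j l = haar_block (2^j * (l - 1)) (2^(j - 1))"
  unfolding haar_def haar_block_def dyadic_block_end[OF assms, symmetric] by auto

lemma abs_haar_block: "\<bar>haar_block a h t\<bar> = of_bool (t \<in> {a<..a + 2 * h})"
  unfolding haar_block_def by auto

lemma sum_abs_haar_block:
  assumes "finite A" "{a<..a + 2 * h} \<subseteq> A"
  shows "(\<Sum>t\<in>A. \<bar>haar_block a h t\<bar>) = 2 * h"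
proof -
  have "A \<inter> {t. t \<in> {a<..a + 2 * h}} = {a<..a + 2 * h}"
    using assms(2) by auto
  then show ?thesis
    unfolding abs_haar_block using assms(1) by simp
qed

lemma abs_haar_block_jump:
  assumes "a < t" "t < a + 2 * h"
  shows "\<bar>haar_block a h (t + 1) - haar_block a h t\<bar> = (if t = a + h then 2 else 0)"
  using assms unfolding haar_block_def by auto

lemma sum_abs_haar_block_jumps:
  assumes "h \<ge> 1"
  shows "(\<Sum>t = a + 1..a + 2 * h - 1. \<bar>haar_block a h (t + 1) - haar_block a h t\<bar>) = 2"
proof -
  have "(\<Sum>t = a + 1..a + 2 * h - 1. \<bar>haar_block a h (t + 1) - haar_block a h t\<bar>)
      = (\<Sum>t = a + 1..a + 2 * h - 1. if t = a + h then 2 else 0)"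
    by (intro sum.cong refl abs_haar_block_jump) auto
  also have "\<dots> = 2"
    using assms by simp
  finally show ?thesis .
qed

lemma abs_haar:
  assumes "j \<ge> 1" "l \<ge> 1"
  shows "\<bar>haar j l t\<bar> = of_bool (t \<in> {2^j * (l - 1)<..2^j * l})"
  unfolding haar_eq_haar_block[OF assms] abs_haar_block dyadic_block_end[OF assms] ..

lemma haar_disjoint_support:
  assumes "j \<ge> 1" "l \<ge> 1" "l' \<ge> 1" "l \<noteq> l'"
  shows "haar j l t = 0 \<or> haar j l' t = 0"
proof (rule ccontr)
  assume "\<not> ?thesis"
  then have "t \<in> {2^j * (l - 1)<..2^j * l}" "t \<in> {2^j * (l' - 1)<..2^j * l'}"
    using abs_haar[OF assms(1,2), of t] abs_haar[OF assms(1,3), of t]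
    by (auto simp: of_bool_def split: if_splits)
  then have "2^j * (l - 1) < 2^j * l'" "2^j * (l' - 1) < (2::nat)^j * l"
    by (meson greaterThanAtMost_iff less_le_trans)+
  then have "l - 1 < l'" "l' - 1 < l"
    by simp_all
  with assms(4) show False
    by arith
qed

lemma norm_sum_eq_sum_norm_if_disjoint:
  fixes f :: "'a \<Rightarrow> 'b::real_normed_vector"
  assumes "finite A" "\<And>x y. x \<in> A \<Longrightarrow> y \<in> A \<Longrightarrow> x \<noteq> y \<Longrightarrow> f x = 0 \<or> f y = 0"
  shows "norm (sum f A) = (\<Sum>x\<in>A. norm (f x))"
proof (cases "\<exists>x\<in>A. f x \<noteq> 0")
  case True
  then obtain x where x: "x \<in> A" "f x \<noteq> 0" by blast
  then have "\<forall>y\<in>A - {x}. f y = 0"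
    using assms(2) by blast
  then show ?thesis
    using assms(1) x(1) by (simp add: sum.remove[of A x])
qed simp

lemma norm_detail:
  "norm (detail m u j l t) = 2 powr (- real j / 2) * \<bar>haar j l t\<bar> * norm (haar_coef m u j l)"
  unfolding detail_def haar_n_def by (simp add: abs_mult)

lemma norm_detail_diff:
  "norm (detail m u j l s - detail m u j l t)
     = 2 powr (- real j / 2) * \<bar>haar j l s - haar j l t\<bar> * norm (haar_coef m u j l)"
  unfolding detail_def haar_n_def
  by (simp add: scaleR_diff_left[symmetric] right_diff_distrib[symmetric] abs_mult)

lemma sum_abs_haar:
  assumes "j \<ge> 1" "l \<ge> 1" "2^j * l \<le> (2::nat)^m"
  shows "(\<Sum>t = 1..2^m. \<bar>haar j l t\<bar>) = 2^j"
proof -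
  have "{2^j * (l - 1)<..2^j * (l - 1) + 2 * 2^(j - 1)} \<subseteq> {1..2^m}"
    using assms(3) unfolding dyadic_block_end[OF assms(1,2)] by auto
  then have "(\<Sum>t = 1..2^m. \<bar>haar j l t\<bar>) = 2 * 2^(j - 1)"
    unfolding haar_eq_haar_block[OF assms(1,2)] by (simp add: sum_abs_haar_block)
  also have "\<dots> = 2^j"
    by (rule double_power_pred[OF assms(1)])
  finally show ?thesis .
qed

lemma sum_abs_haar_jumps:
  assumes "j \<ge> 1" "l \<ge> 1"
  shows "(\<Sum>t = 2^j * (l - 1) + 1..2^j * l - 1. \<bar>haar j l (t + 1) - haar j l t\<bar>) = 2"
  using sum_abs_haar_block_jumps[of "2^(j - 1)" "2^j * (l - 1)"]
  unfolding haar_eq_haar_block[OF assms] dyadic_block_end[OF assms] by simp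

lemma Sbar_eq:
  assumes "j \<ge> 1" "l \<ge> 1" "2^j * l \<le> (2::nat)^m"
  shows "Sbar m u j l = 2 powr (- real j / 2) * 2^j * norm (haar_coef m u j l)"
proof -
  have "Sbar m u j l
      = 2 powr (- real j / 2) * (\<Sum>t = 1..2^m. \<bar>haar j l t\<bar>) * norm (haar_coef m u j l)"
    unfolding Sbar_def norm_detail by (simp add: sum_distrib_left sum_distrib_right)
  then show ?thesis
    unfolding sum_abs_haar[OF assms] .
qed

lemma Pvar_eq:
  assumes "j \<ge> 1" "l \<ge> 1"
  shows "Pvar m u j l = 2 powr (- real j / 2) * 2 * norm (haar_coef m u j l)"
proof -
  have "Pvar m u j l = 2 powr (- real j / 2)
      * (\<Sum>t = 2^j * (l - 1) + 1..2^j * l - 1. \<bar>haar j l (t + 1) - haar j l t\<bar>)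
      * norm (haar_coef m u j l)"
    unfolding Pvar_def norm_detail_diff by (simp add: sum_distrib_left sum_distrib_right)
  then show ?thesis
    unfolding sum_abs_haar_jumps[OF assms] .
qed

lemma norm_detail_scale:
  assumes "j \<ge> 1"
  shows "norm (detail_scale m u j t) = (\<Sum>l = 1..2^m div 2^j. norm (detail m u j l t))"
  unfolding detail_scale_def
proof (rule norm_sum_eq_sum_norm_if_disjoint)
  fix l l' :: nat assume "l \<in> {1..2^m div 2^j}" "l' \<in> {1..2^m div 2^j}" "l \<noteq> l'"
  then show "detail m u j l t = 0 \<or> detail m u j l' t = 0"
    using haar_disjoint_support[OF assms, of l l' t] unfolding detail_def haar_n_def by auto
qed simp

lemma dyadic_block_le_horizon:
  assumes "l \<le> 2^m div 2^j"
  shows "2^j * l \<le> (2::nat)^m"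
proof -
  have "(2::nat)^j * l \<le> 2^j * (2^m div 2^j)"
    using assms by (rule mult_le_mono2)
  also have "\<dots> \<le> 2^m"
    by simp
  finally show ?thesis .
qed

lemma Sbar_scale_eq:
  assumes "j \<ge> 1"
  shows "Sbar_scale m u j
    = 2 powr (- real j / 2) * 2^j * (\<Sum>l = 1..2^m div 2^j. norm (haar_coef m u j l))"
proof -
  have "Sbar_scale m u j = (\<Sum>l = 1..2^m div 2^j. Sbar m u j l)"
    unfolding Sbar_scale_def Sbar_def norm_detail_scale[OF assms] by (rule sum.swap)
  also have "\<dots>
      = (\<Sum>l = 1..2^m div 2^j. 2 powr (- real j / 2) * 2^j * norm (haar_coef m u j l))"
    using assms by (intro sum.cong refl Sbar_eq dyadic_block_le_horizon) auto
  finally show ?thesis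
    by (simp add: sum_distrib_left)
qed

lemma Pvar_scale_eq:
  assumes "j \<ge> 1"
  shows "Pvar_scale m u j
    = 2 powr (- real j / 2) * 2 * (\<Sum>l = 1..2^m div 2^j. norm (haar_coef m u j l))"
  unfolding Pvar_scale_def using assms by (simp add: Pvar_eq sum_distrib_left)

lemma powr_half_sqrt_haar_scaling:
  assumes "x \<ge> 0"
  shows "2 powr (-1/2)
      * sqrt ((2 powr (- real j / 2) * 2 * x) * (2 powr (- real j / 2) * 2^j * x)) = (x::real)"
proof -
  have "2 powr (- real j / 2) * 2 powr (- real j / 2) = (2::real) powr (- real j)"
    by (simp add: powr_add[symmetric])
  also have "\<dots> = 1 / 2^j"
    by (simp add: powr_minus powr_realpow divide_inverse)
  finally have "2 powr (- real j / 2) * 2 powr (- real j / 2) * 2^j = (1::real)"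
    by simp
  then have "(2 powr (- real j / 2) * 2 * x) * (2 powr (- real j / 2) * 2^j * x) = 2 * x^2"
    by (simp add: power2_eq_square algebra_simps)
  then have "sqrt ((2 powr (- real j / 2) * 2 * x) * (2 powr (- real j / 2) * 2^j * x))
      = sqrt (2 * x^2)"
    by (simp only:)
  also have "\<dots> = sqrt 2 * x"
    using assms by (simp add: real_sqrt_mult)
  finally have "sqrt ((2 powr (- real j / 2) * 2 * x) * (2 powr (- real j / 2) * 2^j * x))
      = sqrt 2 * x" .
  moreover have "2 powr (-1/2) * sqrt 2 = (1::real)"
    by (simp add: powr_half_sqrt[symmetric] powr_add[symmetric])
  ultimately show ?thesis
    by (metis mult.assoc mult_1)
qed

theorem lemma6:
  fixes m :: nat and u :: "nat \<Rightarrow> real^'d"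
  shows "(\<forall>j \<in> {1..m}. \<forall>l \<in> {1..2^m div 2^j}.
            norm (haar_coef m u j l) = 2 powr (-1/2) * sqrt (Pvar m u j l * Sbar m u j l))
       \<and> (\<forall>j \<in> {1..m}.
            (\<Sum>l = 1..2^m div 2^j. norm (haar_coef m u j l))
              \<le> 2 powr (-1/2) * sqrt (Pvar_scale m u j * Sbar_scale m u j))"
proof (intro conjI ballI)
  fix j l :: nat assume "j \<in> {1..m}" and "l \<in> {1..2^m div 2^j}"
  then have j: "j \<ge> 1" and l: "l \<ge> 1" and block: "2^j * l \<le> (2::nat)^m"
    by (auto intro: dyadic_block_le_horizon)
  show "norm (haar_coef m u j l) = 2 powr (-1/2) * sqrt (Pvar m u j l * Sbar m u j l)"
    unfolding Pvar_eq[OF j l] Sbar_eq[OF j l block]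
    by (intro powr_half_sqrt_haar_scaling[symmetric]) simp
next
  fix j :: nat assume "j \<in> {1..m}"
  then have j: "j \<ge> 1"
    by simp
  have "2 powr (-1/2) * sqrt (Pvar_scale m u j * Sbar_scale m u j)
      = (\<Sum>l = 1..2^m div 2^j. norm (haar_coef m u j l))"
    unfolding Pvar_scale_eq[OF j] Sbar_scale_eq[OF j]
    by (intro powr_half_sqrt_haar_scaling sum_nonneg) simp
  then show "(\<Sum>l = 1..2^m div 2^j. norm (haar_coef m u j l))
      \<le> 2 powr (-1/2) * sqrt (Pvar_scale m u j * Sbar_scale m u j)"
    by simp
qed

end
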